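(* (Euler's Formula for Resistance Function I.) Let $\Gamma$ be a metrized graph whose edges are $e_1,\dots,e_m$, where $e_i$ has end points $p_i,q_i$ and length $L_i$. For $s,t\in V(\Gamma)$ let $B=\{e_i\in E(\Gamma): s \text{ and } t \text{ are disconnected in } \Gamma-e_i\}$. Then $$r(s,t)=\sum_{e_i\in B}L_i+\sum_{\substack{e_i\in E(\Gamma)\\ e_i \text{ not a bridge}}}\frac{L_i}{(L_i+R_i)^2}\big(j^{\Gamma-e_i}_{p_i}(q_i,s)-j^{\Gamma-e_i}_{p_i}(q_i,t)\big)^2=\sum_{e_i\in B}L_i+\sum_{\substack{e_i\in E(\Gamma)\\ e_i \text{ not a bridge}}}\frac{1}{L_i}\big(j_{p_i}(q_i,s)-j_{p_i}(q_i,t)\big)^2.$$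
   Context: A metrized graph $\Gamma$ is a finite connected graph (multiple edges and self-loops allowed) in which each edge is identified with a closed line segment of positive length; $V(\Gamma)$ is a chosen finite vertex set and $E(\Gamma)$ the resulting edge set. $\Gamma$ is regarded as a resistive electric circuit in which each edge is a resistor whose resistance equals its length. $r(x,y)$ is the effective resistance between $x$ and $y$; $j_z(x,y)$ is the voltage at $x$ when a unit current enters at $y$ and exits at $z$, with reference voltage $0$ at $z$. $\Gamma-e_i$ is obtained by deleting the interior of $e_i$; $e_i$ is a bridge if $\Gamma-e_i$ is disconnected; for non-bridge $e_i$, $R_i:=r_{\Gamma-e_i}(p_i,q_i)$, and $j^{\Gamma-e_i}$ is the voltage function of $\Gamma-e_i$. *)

theory Defs
  imports Complex_Main
begin

text \<open>A metrized graph with vertex set V, edge set E (edges are abstract labels, so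
multiple edges and self-loops are allowed), endpoint maps p q and edge lengths L.
All quantities in the theorem are evaluated at vertices, so the electric circuit is
the finite resistive network on V with resistance L e on edge e.\<close>

definition adj :: "'e set \<Rightarrow> ('e \<Rightarrow> 'v) \<Rightarrow> ('e \<Rightarrow> 'v) \<Rightarrow> ('v \<times> 'v) set" where
  "adj E p q = {(p e, q e) | e. e \<in> E} \<union> {(q e, p e) | e. e \<in> E}"

definition connected_in :: "'e set \<Rightarrow> ('e \<Rightarrow> 'v) \<Rightarrow> ('e \<Rightarrow> 'v) \<Rightarrow> 'v \<Rightarrow> 'v \<Rightarrow> bool" where
  "connected_in E p q u v \<longleftrightarrow> (u, v) \<in> (adj E p q)\<^sup>*"

definition graph_connected :: "'v set \<Rightarrow> 'e set \<Rightarrow> ('e \<Rightarrow> 'v) \<Rightarrow> ('e \<Rightarrow> 'v) \<Rightarrow> bool" where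
  "graph_connected V E p q \<longleftrightarrow> V \<noteq> {} \<and> (\<forall>u\<in>V. \<forall>v\<in>V. connected_in E p q u v)"

definition metrized_graph ::
  "'v set \<Rightarrow> 'e set \<Rightarrow> ('e \<Rightarrow> 'v) \<Rightarrow> ('e \<Rightarrow> 'v) \<Rightarrow> ('e \<Rightarrow> real) \<Rightarrow> bool" where
  "metrized_graph V E p q L \<longleftrightarrow> finite V \<and> finite E \<and>
     (\<forall>e\<in>E. p e \<in> V \<and> q e \<in> V \<and> L e > 0) \<and> graph_connected V E p q"

definition is_bridge :: "'v set \<Rightarrow> 'e set \<Rightarrow> ('e \<Rightarrow> 'v) \<Rightarrow> ('e \<Rightarrow> 'v) \<Rightarrow> 'e \<Rightarrow> bool" where
  "is_bridge V E p q e \<longleftrightarrow> \<not> graph_connected V (E - {e}) p q"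

text \<open>Net current flowing out of vertex v into the network for the potential f
(Ohm's law on each edge; self-loops carry no current).\<close>
definition net_current ::
  "'e set \<Rightarrow> ('e \<Rightarrow> 'v) \<Rightarrow> ('e \<Rightarrow> 'v) \<Rightarrow> ('e \<Rightarrow> real) \<Rightarrow> ('v \<Rightarrow> real) \<Rightarrow> 'v \<Rightarrow> real" where
  "net_current E p q L f v =
     (\<Sum>e\<in>{e\<in>E. p e = v}. (f v - f (q e)) / L e) +
     (\<Sum>e\<in>{e\<in>E. q e = v}. (f v - f (p e)) / L e)"

text \<open>f is the voltage when a unit current enters at y and exits at z, with
reference voltage 0 at z (and f vanishes off V, to make it unique).\<close>
definition is_voltage ::
  "'v set \<Rightarrow> 'e set \<Rightarrow> ('e \<Rightarrow> 'v) \<Rightarrow> ('e \<Rightarrow> 'v) \<Rightarrow> ('e \<Rightarrow> real) \<Rightarrow> 'v \<Rightarrow> 'v \<Rightarrow> ('v \<Rightarrow> real) \<Rightarrow> bool" where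
  "is_voltage V E p q L z y f \<longleftrightarrow>
     (\<forall>v. v \<notin> V \<longrightarrow> f v = 0) \<and> f z = 0 \<and>
     (\<forall>v\<in>V. net_current E p q L f v = (if v = y then 1 else 0) - (if v = z then 1 else 0))"

text \<open>j_z(x,y): voltage at x, unit current entering at y and exiting at z.\<close>
definition jfun ::
  "'v set \<Rightarrow> 'e set \<Rightarrow> ('e \<Rightarrow> 'v) \<Rightarrow> ('e \<Rightarrow> 'v) \<Rightarrow> ('e \<Rightarrow> real) \<Rightarrow> 'v \<Rightarrow> 'v \<Rightarrow> 'v \<Rightarrow> real" where
  "jfun V E p q L z x y = (THE f. is_voltage V E p q L z y f) x"

definition resistance ::
  "'v set \<Rightarrow> 'e set \<Rightarrow> ('e \<Rightarrow> 'v) \<Rightarrow> ('e \<Rightarrow> 'v) \<Rightarrow> ('e \<Rightarrow> real) \<Rightarrow> 'v \<Rightarrow> 'v \<Rightarrow> real" where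
  "resistance V E p q L x y = jfun V E p q L y x x"

end

(* r(s,t) is the energy of the unit current flow u from s to t: by Green's identity it is the
   sum over the edges of L e * I_e^2, where I_e is the current through e.  A bridge carries the
   whole current or none, according to whether it separates s from t.  For any other edge e,
   superposition in \<Gamma> - e gives I_e = U_e / (L e + R_e), where U_e is the voltage drop across
   the endpoints of e of the unit s-t flow in \<Gamma> - e.  Reciprocity of the voltage function
   rewrites U_e, and likewise the drop u(p e) - u(q e) in \<Gamma> itself, as
   j_{p e}(q e, t) - j_{p e}(q e, s). *)

theory Submission
  imports Defs "HOL-Library.Function_Algebras"
begin

lemma (in vector_space) linear_inj_on_span_imp_onto:
  assumes lin: "Vector_Spaces.linear scale scale T" and fin: "finite B"
    and into: "T ` span B \<subseteq> span B" and inj: "inj_on T (span B)"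
  shows "T ` span B = span B"
proof -
  interpret T: Vector_Spaces.linear scale scale T by (fact lin)
  obtain C where C: "C \<subseteq> B" "independent C" "B \<subseteq> span C"
    using maximal_independent_subset[of B] by blast
  have span_C: "span C = span B"
    using C(1,3) span_mono span_span span_minimal subspace_span by (metis subset_antisym)
  have fin_C: "finite C" using C(1) fin by (rule finite_subset)
  have indep_TC: "independent (T ` C)"
    using T.independent_injective_image[OF C(2)] inj span_C by simp
  have card_TC: "card (T ` C) = card C"
    using C(1) span_superset by (intro card_image inj_on_subset[OF inj]) blast
  have "span B \<subseteq> span (T ` C)"
  proof
    fix y assume y: "y \<in> span B"
    show "y \<in> span (T ` C)"
    proof (rule ccontr)
      assume y_out: "y \<notin> span (T ` C)"
      have "independent (insert y (T ` C))" using y_out indep_TC by (rule independent_insertI)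
      moreover have "insert y (T ` C) \<subseteq> span C"
        using y into span_C span_superset by blast
      ultimately have "card (insert y (T ` C)) \<le> card C"
        using independent_span_bound[OF fin_C] by blast
      moreover have "y \<notin> T ` C" using y_out span_base by blast
      ultimately show False using card_TC fin_C by simp
    qed
  qed
  then show ?thesis using into T.span_image[of C] span_C by auto
qed

interpretation real_fun: vector_space "\<lambda>(c::real) (f::'a \<Rightarrow> real) x. c * f x"
  by unfold_locales (auto simp: algebra_simps fun_eq_iff)

lemma sum_fun_apply: "sum h A x = (\<Sum>a\<in>A. h a x)"
  by (induct A rule: infinite_finite_induct) auto

lemma real_fun_span_deltas:
  assumes "finite V"
  shows "real_fun.span ((\<lambda>v x. if x = v then 1 else 0) ` V) = {f. \<forall>x. x \<notin> V \<longrightarrow> f x = 0}"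
    (is "real_fun.span ?\<delta> = ?S")
proof (rule real_fun.span_subspace)
  show "?\<delta> \<subseteq> ?S" by auto
  show "real_fun.subspace ?S" by (auto simp: real_fun.subspace_def)
  show "?S \<subseteq> real_fun.span ?\<delta>"
  proof
    fix f assume "f \<in> ?S"
    have "(\<Sum>v\<in>V. f v * (if x = v then 1 else 0)) = (\<Sum>v\<in>V. if x = v then f v else 0)" for x
      by (rule sum.cong) auto
    then have "f = (\<Sum>v\<in>V. (\<lambda>x. f v * (if x = v then 1 else 0)))"
      using \<open>f \<in> ?S\<close> assms by (auto simp: fun_eq_iff sum_fun_apply)
    also have "\<dots> \<in> real_fun.span ?\<delta>"
      by (intro real_fun.span_sum real_fun.span_scale real_fun.span_base) auto
    finally show "f \<in> real_fun.span ?\<delta>" .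
  qed
qed

lemma inj_linear_onto_finite_support:
  fixes T :: "('v \<Rightarrow> real) \<Rightarrow> ('v \<Rightarrow> real)"
  assumes "finite V"
    and add: "\<And>f h. T (\<lambda>x. f x + h x) = (\<lambda>x. T f x + T h x)"
    and scale: "\<And>c f. T (\<lambda>x. c * f x) = (\<lambda>x. c * T f x)"
    and into: "\<And>f x. x \<notin> V \<Longrightarrow> T f x = 0"
    and kernel: "\<And>f. (\<forall>x. x \<notin> V \<longrightarrow> f x = 0) \<Longrightarrow> T f = (\<lambda>x. 0) \<Longrightarrow> f = (\<lambda>x. 0)"
    and g: "\<forall>x. x \<notin> V \<longrightarrow> g x = 0"
  obtains f where "\<forall>x. x \<notin> V \<longrightarrow> f x = 0" and "T f = g"
proof -
  let ?S = "{f. \<forall>x. x \<notin> V \<longrightarrow> f x = 0}"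
  have lin: "Vector_Spaces.linear (\<lambda>c f x. c * f x) (\<lambda>c f x. c * f x) T"
    by (auto simp: Vector_Spaces.linear_iff real_fun.vector_space_axioms plus_fun_def add scale)
  have T_diff: "T (\<lambda>x. f x - h x) = (\<lambda>x. T f x - T h x)" for f h
    using add[of f "\<lambda>x. - h x"] scale[of "-1" h] by simp
  have "inj_on T ?S"
  proof (rule inj_onI)
    fix f h assume "f \<in> ?S" "h \<in> ?S" "T f = T h"
    then have "\<forall>x. x \<notin> V \<longrightarrow> f x - h x = 0" and "T (\<lambda>x. f x - h x) = (\<lambda>x. 0)"
      by (simp_all add: T_diff)
    then have "(\<lambda>x. f x - h x) = (\<lambda>x. 0)" by (rule kernel)
    then show "f = h" by (metis eq_iff_diff_eq_0 ext)
  qed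
  moreover have "T ` ?S \<subseteq> ?S" using into by auto
  ultimately have "T ` ?S = ?S"
    using real_fun.linear_inj_on_span_imp_onto[OF lin,
        where B = "(\<lambda>v x. if x = v then 1 else 0) ` V"] assms(1)
    unfolding real_fun_span_deltas[OF assms(1)] by simp
  moreover have "g \<in> ?S" using g by simp
  ultimately have "g \<in> T ` ?S" by simp
  then obtain f where "f \<in> ?S" and "T f = g" by auto
  then show thesis using that by simp
qed

lemma sym_adj: "sym (adj E p q)"
  by (auto simp: adj_def sym_def)

lemma connected_in_refl: "connected_in E p q u u"
  by (simp add: connected_in_def)

lemma connected_in_trans:
  "connected_in E p q u v \<Longrightarrow> connected_in E p q v w \<Longrightarrow> connected_in E p q u w"
  unfolding connected_in_def by (rule rtrancl_trans)

lemma connected_in_sym: "connected_in E p q u v \<Longrightarrow> connected_in E p q v u"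
  unfolding connected_in_def using sym_rtrancl[OF sym_adj] by (rule symD)

lemma connected_in_edge: "e \<in> E \<Longrightarrow> connected_in E p q (p e) (q e)"
  unfolding connected_in_def adj_def by (rule r_into_rtrancl) blast

lemma connected_in_delete_edge:
  assumes "connected_in E p q (p e) u"
  shows "connected_in (E - {e}) p q (p e) u \<or> connected_in (E - {e}) p q (q e) u"
  using assms unfolding connected_in_def
proof (induct rule: rtrancl_induct)
  case base
  then show ?case by simp
next
  case (step y z)
  from step(2) obtain e' where e': "e' \<in> E" "(y = p e' \<and> z = q e') \<or> (y = q e' \<and> z = p e')"
    by (auto simp: adj_def)
  show ?case
  proof (cases "e' = e")
    case True
    then show ?thesis using e' by auto
  next
    case False
    then have "(y, z) \<in> adj (E - {e}) p q" using e' by (auto simp: adj_def)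
    then show ?thesis using step(3) by (meson rtrancl.rtrancl_into_rtrancl)
  qed
qed

lemma separating_edge_is_bridge:
  assumes "s \<in> V" "t \<in> V" "\<not> connected_in (E - {e}) p q s t"
  shows "is_bridge V E p q e"
  using assms by (auto simp: is_bridge_def graph_connected_def)

lemma bridge_endpoints_disconnected:
  assumes conn: "graph_connected V E p q" and "p e \<in> V" and bridge: "is_bridge V E p q e"
  shows "\<not> connected_in (E - {e}) p q (p e) (q e)"
proof
  assume pq: "connected_in (E - {e}) p q (p e) (q e)"
  have "connected_in (E - {e}) p q (p e) u" if "u \<in> V" for u
    using connected_in_delete_edge[of E p q e u] conn \<open>p e \<in> V\<close> that pq
    by (auto simp: graph_connected_def intro: connected_in_trans)
  then have "graph_connected V (E - {e}) p q"
    using conn unfolding graph_connected_def by (meson connected_in_sym connected_in_trans)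
  then show False using bridge by (simp add: is_bridge_def)
qed

locale resistive_network =
  fixes V :: "'v set" and E :: "'e set" and p q :: "'e \<Rightarrow> 'v" and L :: "'e \<Rightarrow> real"
  assumes finite_V: "finite V" and finite_E: "finite E"
    and tail_in_V: "\<And>e. e \<in> E \<Longrightarrow> p e \<in> V" and head_in_V: "\<And>e. e \<in> E \<Longrightarrow> q e \<in> V"
    and length_pos: "\<And>e. e \<in> E \<Longrightarrow> 0 < L e"
begin

abbreviation current where "current \<equiv> net_current E p q L"

definition energy :: "('v \<Rightarrow> real) \<Rightarrow> real" where
  "energy f = (\<Sum>e\<in>E. (f (p e) - f (q e))\<^sup>2 / L e)"

lemma energy_nonneg: "0 \<le> energy f"
  unfolding energy_def using length_pos by (auto intro!: sum_nonneg divide_nonneg_pos)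

lemma energy_eq_0_imp_const_on_edges:
  assumes "energy f = 0" and "e \<in> E"
  shows "f (p e) = f (q e)"
proof -
  have "\<forall>e\<in>E. (f (p e) - f (q e))\<^sup>2 / L e = 0"
    using assms(1) length_pos finite_E
    by (subst sum_nonneg_eq_0_iff[symmetric]) (auto simp: energy_def intro: divide_nonneg_pos)
  then have "(f (p e) - f (q e))\<^sup>2 / L e = 0" using assms(2) by blast
  with length_pos[OF assms(2)] show ?thesis by simp
qed

lemma const_on_edges_imp_const_on_connected:
  assumes "\<And>e. e \<in> E \<Longrightarrow> f (p e) = f (q e)" and "connected_in E p q u w"
  shows "f u = f w"
  using assms(2) unfolding connected_in_def
  by (induct rule: rtrancl_induct) (auto simp: adj_def dest: assms(1))

lemma current_add: "current (\<lambda>x. f x + g x) v = current f v + current g v"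
proof -
  have edge: "(f a + g a - (f b + g b)) / l = (f a - f b) / l + (g a - g b) / l" for a b and l :: real
    by (simp add: add_divide_distrib[symmetric] algebra_simps)
  show ?thesis unfolding net_current_def edge sum.distrib by simp
qed

lemma current_scale: "current (\<lambda>x. c * f x) v = c * current f v"
  unfolding net_current_def
  by (simp add: sum_distrib_left distrib_left flip: right_diff_distrib times_divide_eq_right)

lemma current_diff: "current (\<lambda>x. f x - g x) v = current f v - current g v"
proof -
  have edge: "(f a - g a - (f b - g b)) / l = (f a - f b) / l - (g a - g b) / l" for a b and l :: real
    by (simp add: diff_divide_distrib[symmetric] algebra_simps)
  show ?thesis unfolding net_current_def edge sum_subtractf by simp
qed

lemma green_identity:
  "(\<Sum>v\<in>V. g v * current f v) = (\<Sum>e\<in>E. (g (p e) - g (q e)) * (f (p e) - f (q e)) / L e)"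
proof -
  have group: "(\<Sum>v\<in>V. g v * (\<Sum>e\<in>{e\<in>E. a e = v}. (f v - f (b e)) / L e))
      = (\<Sum>e\<in>E. g (a e) * (f (a e) - f (b e)) / L e)" if "\<And>e. e \<in> E \<Longrightarrow> a e \<in> V" for a b
  proof -
    have "(\<Sum>v\<in>V. g v * (\<Sum>e\<in>{e\<in>E. a e = v}. (f v - f (b e)) / L e))
        = (\<Sum>v\<in>V. \<Sum>e\<in>{e\<in>E. a e = v}. g (a e) * (f (a e) - f (b e)) / L e)"
      by (auto simp: sum_distrib_left intro!: sum.cong)
    also have "\<dots> = (\<Sum>e\<in>E. g (a e) * (f (a e) - f (b e)) / L e)"
      using finite_E finite_V that by (intro sum.group) auto
    finally show ?thesis .
  qed
  have "(\<Sum>v\<in>V. g v * current f v)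
      = (\<Sum>e\<in>E. g (p e) * (f (p e) - f (q e)) / L e + g (q e) * (f (q e) - f (p e)) / L e)"
    unfolding net_current_def distrib_left sum.distrib
    using group[where a=p and b=q] group[where a=q and b=p] tail_in_V head_in_V by simp
  also have "\<dots> = (\<Sum>e\<in>E. (g (p e) - g (q e)) * (f (p e) - f (q e)) / L e)"
    by (rule sum.cong) (auto simp: algebra_simps diff_divide_distrib add_divide_distrib)
  finally show ?thesis .
qed

lemma sum_current_eq_0: "(\<Sum>v\<in>V. current f v) = 0"
  using green_identity[of "\<lambda>_. 1" f] by simp

lemma energy_eq_sum_current: "energy f = (\<Sum>v\<in>V. f v * current f v)"
  unfolding energy_def green_identity by (simp add: power2_eq_square)

lemma current_delete_edge:
  assumes "e \<in> E"
  shows "current f v = net_current (E - {e}) p q L f v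
     + (if p e = v then (f v - f (q e)) / L e else 0) + (if q e = v then (f v - f (p e)) / L e else 0)"
proof -
  have split: "(\<Sum>e'\<in>{e'\<in>E. a e' = v}. h e') = (if a e = v then h e else 0) + (\<Sum>e'\<in>{e'\<in>E - {e}. a e' = v}. h e')"
    for a :: "'e \<Rightarrow> 'v" and h :: "'e \<Rightarrow> real"
  proof -
    have "{e'\<in>E. a e' = v} = (if a e = v then insert e {e'\<in>E - {e}. a e' = v} else {e'\<in>E - {e}. a e' = v})"
      using assms by auto
    then show ?thesis using finite_E by simp
  qed
  show ?thesis unfolding net_current_def split[where a=p] split[where a=q] by simp
qed

lemma resistive_network_delete_edge: "resistive_network V (E - {e}) p q L"
  using finite_V finite_E tail_in_V head_in_V length_pos by unfold_locales auto

end

locale connected_network = resistive_network +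
  assumes connected: "graph_connected V E p q"
begin

lemma harmonic_imp_const:
  assumes "\<forall>v\<in>V. current f v = 0" and "u \<in> V" and "w \<in> V"
  shows "f u = f w"
proof -
  have "energy f = 0" using assms(1) by (simp add: energy_eq_sum_current)
  then have "\<And>e. e \<in> E \<Longrightarrow> f (p e) = f (q e)" by (rule energy_eq_0_imp_const_on_edges)
  moreover have "connected_in E p q u w" using connected assms(2,3) by (auto simp: graph_connected_def)
  ultimately show ?thesis by (rule const_on_edges_imp_const_on_connected)
qed

lemma voltage_unique:
  assumes "z \<in> V" and f: "is_voltage V E p q L z y f" and g: "is_voltage V E p q L z y g"
  shows "f = g"
proof
  fix x
  have "\<forall>v\<in>V. current (\<lambda>x. f x - g x) v = 0" using f g by (simp add: current_diff is_voltage_def)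
  then have "f x - g x = f z - g z" if "x \<in> V"
    using harmonic_imp_const[of "\<lambda>x. f x - g x"] that assms(1) by blast
  then show "f x = g x" using f g by (cases "x \<in> V") (auto simp: is_voltage_def)
qed

text \<open>Kirchhoff's equations at all vertices but the sink z, together with the grounding f z = 0,
  form a square linear system (the equation at z follows, as all currents sum to zero);
  harmonic functions being constant, it is nonsingular.\<close>
lemma voltage_exists:
  assumes z: "z \<in> V" and y: "y \<in> V"
  obtains f where "is_voltage V E p q L z y f"
proof -
  define T where "T f = (\<lambda>v. if v \<in> V then (if v = z then f z else current f v) else 0)" for f
  have current_z: "current f z = - (\<Sum>v\<in>V - {z}. current f v)" for f
    using sum_current_eq_0[of f] sum.remove[OF finite_V z, of "current f"] by simp
  have T_add: "T (\<lambda>x. f x + g x) = (\<lambda>x. T f x + T g x)" for f g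
    by (auto simp: T_def current_add)
  have T_scale: "T (\<lambda>x. c * f x) = (\<lambda>x. c * T f x)" for c f
    by (auto simp: T_def current_scale)
  have T_kernel: "f = (\<lambda>x. 0)" if f_V: "\<forall>x. x \<notin> V \<longrightarrow> f x = 0" and Tf: "T f = (\<lambda>x. 0)" for f
  proof -
    have "current f v = 0" if "v \<in> V - {z}" for v
      using fun_cong[OF Tf, of v] that by (auto simp: T_def)
    then have "\<forall>v\<in>V. current f v = 0" using current_z[of f] by auto
    moreover have "f z = 0" using fun_cong[OF Tf, of z] z by (simp add: T_def)
    ultimately have "f u = 0" if "u \<in> V" for u using harmonic_imp_const[of f u z] that z by simp
    then show ?thesis using f_V by auto
  qed
  obtain f where f_V: "\<forall>x. x \<notin> V \<longrightarrow> f x = 0"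
    and Tf: "T f = (\<lambda>v. if v \<in> V \<and> v \<noteq> z \<and> v = y then 1 else 0)"
    using inj_linear_onto_finite_support[where T = T, OF finite_V T_add T_scale _ T_kernel,
        where g = "\<lambda>v. if v \<in> V \<and> v \<noteq> z \<and> v = y then 1 else 0"]
    by (auto simp: T_def)
  have "current f v = (if v = y then 1 else 0)" if "v \<in> V - {z}" for v
    using fun_cong[OF Tf, of v] that by (auto simp: T_def)
  moreover have "(\<Sum>v\<in>V - {z}. if v = y then 1 else 0) = (if z = y then 0 else 1 :: real)"
    using finite_V y by auto
  ultimately have "current f z = (if z = y then 1 else 0) - 1"
    using current_z[of f] by simp
  moreover have "f z = 0" using fun_cong[OF Tf, of z] z by (simp add: T_def)
  ultimately have "is_voltage V E p q L z y f"
    unfolding is_voltage_def using f_V \<open>\<And>v. v \<in> V - {z} \<Longrightarrow> _\<close> by auto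
  then show thesis by (rule that)
qed

definition voltage where
  "voltage z y = (THE f. is_voltage V E p q L z y f)"

lemma is_voltage_voltage:
  assumes "z \<in> V" "y \<in> V"
  shows "is_voltage V E p q L z y (voltage z y)"
proof -
  have "\<exists>!f. is_voltage V E p q L z y f"
    using voltage_exists[OF assms] voltage_unique[OF assms(1)] by metis
  then show ?thesis unfolding voltage_def by (rule theI')
qed

lemma jfun_eq_voltage: "jfun V E p q L z x y = voltage z y x"
  by (simp add: jfun_def voltage_def)

lemma voltage_sink: "z \<in> V \<Longrightarrow> y \<in> V \<Longrightarrow> voltage z y z = 0"
  using is_voltage_voltage by (simp add: is_voltage_def)

lemma current_voltage:
  "z \<in> V \<Longrightarrow> y \<in> V \<Longrightarrow> v \<in> V \<Longrightarrow>
    current (voltage z y) v = (if v = y then 1 else 0) - (if v = z then 1 else 0)"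
  using is_voltage_voltage by (simp add: is_voltage_def)

lemma sum_times_current_voltage:
  assumes "z \<in> V" "y \<in> V"
  shows "(\<Sum>v\<in>V. g v * current (voltage z y) v) = g y - g z"
proof -
  have "(\<Sum>v\<in>V. g v * current (voltage z y) v)
      = (\<Sum>v\<in>V. (if v = y then g v else 0) - (if v = z then g v else 0))"
    using assms by (intro sum.cong) (auto simp: current_voltage)
  also have "\<dots> = g y - g z" using assms finite_V by (simp add: sum_subtractf)
  finally show ?thesis .
qed

lemma voltage_reciprocity:
  assumes "a \<in> V" "b \<in> V" "c \<in> V" "d \<in> V"
  shows "voltage c d b - voltage c d a = voltage a b d - voltage a b c"
proof -
  have "voltage c d b - voltage c d a = (\<Sum>v\<in>V. voltage c d v * current (voltage a b) v)"
    using sum_times_current_voltage assms by simp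
  also have "\<dots> = (\<Sum>v\<in>V. voltage a b v * current (voltage c d) v)"
    unfolding green_identity by (simp add: mult.commute)
  also have "\<dots> = voltage a b d - voltage a b c" using sum_times_current_voltage assms by simp
  finally show ?thesis .
qed

lemma voltage_sym: "z \<in> V \<Longrightarrow> x \<in> V \<Longrightarrow> y \<in> V \<Longrightarrow> voltage z y x = voltage z x y"
  using voltage_reciprocity[of z y z x] voltage_sink by simp

lemma resistance_eq_energy:
  assumes "x \<in> V" "y \<in> V"
  shows "resistance V E p q L x y = energy (voltage y x)"
  using sum_times_current_voltage[OF assms(2,1), of "voltage y x"] voltage_sink[OF assms(2,1)]
  by (simp add: resistance_def jfun_eq_voltage energy_eq_sum_current)

lemma resistance_nonneg: "x \<in> V \<Longrightarrow> y \<in> V \<Longrightarrow> 0 \<le> resistance V E p q L x y"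
  by (simp add: resistance_eq_energy energy_nonneg)

lemma voltage_drop_reciprocity:
  assumes "s \<in> V" "t \<in> V" "x \<in> V" "y \<in> V"
  shows "voltage t s x - voltage t s y = voltage x t y - voltage x s y"
  using voltage_reciprocity[of t s x y] voltage_sym[of x s y] voltage_sym[of x t y] assms by simp

lemma connected_network_delete_non_bridge:
  "\<not> is_bridge V E p q e \<Longrightarrow> connected_network V (E - {e}) p q L"
  using resistive_network_delete_edge
  by (simp add: is_bridge_def connected_network_def connected_network_axioms_def)

text \<open>A bridge splits the graph into the side of p e and the side of q e; testing Green's
  identity against the indicator of the former shows that the bridge carries the whole current, or none.\<close>
lemma bridge_current:
  assumes e: "e \<in> E" and bridge: "is_bridge V E p q e" and "x \<in> V" "y \<in> V"
  shows "(voltage y x (p e) - voltage y x (q e)) / L e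
    = (if connected_in (E - {e}) p q (p e) x then 1 else 0)
      - (if connected_in (E - {e}) p q (p e) y then 1 else 0)"
proof -
  let ?g = "\<lambda>v. if connected_in (E - {e}) p q (p e) v then 1 else 0 :: real"
  let ?u = "voltage y x"
  have side_closed: "?g (p e') = ?g (q e')" if "e' \<in> E - {e}" for e'
    using connected_in_edge[OF that] by (metis connected_in_sym connected_in_trans)
  have "?g x - ?g y = (\<Sum>v\<in>V. ?g v * current ?u v)"
    using assms by (simp add: sum_times_current_voltage)
  also have "\<dots> = (\<Sum>e'\<in>E. (?g (p e') - ?g (q e')) * (?u (p e') - ?u (q e')) / L e')"
    by (rule green_identity)
  also have "\<dots> = (?g (p e) - ?g (q e)) * (?u (p e) - ?u (q e)) / L e"
    using side_closed by (simp add: sum.remove[OF finite_E e])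
  also have "?g (p e) - ?g (q e) = 1"
    using bridge_endpoints_disconnected[OF connected tail_in_V[OF e] bridge]
    by (simp add: connected_in_refl)
  finally show ?thesis by simp
qed

lemma bridge_energy:
  assumes e: "e \<in> E" and bridge: "is_bridge V E p q e" and s: "s \<in> V" and t: "t \<in> V"
  shows "(voltage t s (p e) - voltage t s (q e))\<^sup>2 / L e
    = (if connected_in (E - {e}) p q s t then 0 else L e)"
proof -
  let ?c = "connected_in (E - {e}) p q (p e)"
  let ?I = "(voltage t s (p e) - voltage t s (q e)) / L e"
  have L: "0 < L e" using length_pos[OF e] .
  have energy: "(voltage t s (p e) - voltage t s (q e))\<^sup>2 / L e = ?I\<^sup>2 * L e"
    using L by (simp add: power2_eq_square)
  have I: "?I = (if ?c s then 1 else 0) - (if ?c t then 1 else 0)"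
    using bridge_current[OF e bridge s t] .
  show ?thesis
  proof (cases "connected_in (E - {e}) p q s t")
    case True
    then have "?c s \<longleftrightarrow> ?c t" by (meson connected_in_sym connected_in_trans)
    then show ?thesis using True energy I by simp
  next
    case False
    have "connected_in E p q (p e) s" "connected_in E p q (p e) t"
      using connected tail_in_V[OF e] s t by (auto simp: graph_connected_def)
    then have "?c s \<or> ?c t"
      using connected_in_delete_edge False by (metis connected_in_sym connected_in_trans)
    moreover have "\<not> (?c s \<and> ?c t)" using False by (meson connected_in_sym connected_in_trans)
    ultimately have "?I\<^sup>2 = 1" using I by auto
    then show ?thesis using False energy by simp
  qed
qed

text \<open>Superposition in \<Gamma> - e: the flow of \<Gamma> is that of \<Gamma> - e corrected by the current I through e,
  which re-enters \<Gamma> - e at q e and leaves it at p e.  The correction u - u' + I \<psi> is harmonic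
  on \<Gamma> - e, hence constant, which yields I (L e + R) = U.\<close>
lemma non_bridge_voltage_drop:
  assumes e: "e \<in> E" and non_bridge: "\<not> is_bridge V E p q e" and s: "s \<in> V" and t: "t \<in> V"
  defines "R \<equiv> resistance V (E - {e}) p q L (p e) (q e)"
    and "U \<equiv> connected_network.voltage V (E - {e}) p q L t s (p e)
            - connected_network.voltage V (E - {e}) p q L t s (q e)"
  shows "voltage t s (p e) - voltage t s (q e) = L e / (L e + R) * U"
proof -
  interpret H: connected_network V "E - {e}" p q L
    using connected_network_delete_non_bridge[OF non_bridge] .
  have pe: "p e \<in> V" and qe: "q e \<in> V" and L: "0 < L e"
    using e tail_in_V head_in_V length_pos by auto
  define u where "u = voltage t s"
  define u' where "u' = H.voltage t s"
  define \<psi> where "\<psi> = H.voltage (q e) (p e)"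
  define I where "I = (u (p e) - u (q e)) / L e"
  define h where "h x = u x - u' x + I * \<psi> x" for x
  have "H.current h v = 0" if v: "v \<in> V" for v
  proof -
    have "H.current h v = H.current u v - H.current u' v + I * H.current \<psi> v"
      unfolding h_def H.current_add H.current_diff H.current_scale ..
    also have "H.current u v = current u v
        - (if p e = v then (u v - u (q e)) / L e else 0) - (if q e = v then (u v - u (p e)) / L e else 0)"
      using current_delete_edge[OF e, of u v] by simp
    finally show ?thesis
      using v s t pe qe L unfolding u_def u'_def \<psi>_def
      by (cases "v = p e"; cases "v = q e")
        (auto simp: current_voltage H.current_voltage I_def u_def field_simps)
  qed
  then have "h (p e) = h (q e)" using H.harmonic_imp_const pe qe by blast
  moreover have "\<psi> (q e) = 0" "\<psi> (p e) = R"
    using H.voltage_sink[OF qe pe] by (simp_all add: \<psi>_def R_def resistance_def H.jfun_eq_voltage)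
  moreover have "I * L e = u (p e) - u (q e)" using L by (simp add: I_def)
  ultimately have "I * L e = U - I * R"
    by (simp add: h_def U_def u'_def algebra_simps)
  moreover have "0 \<le> R" unfolding R_def using H.resistance_nonneg pe qe .
  ultimately show ?thesis
    using L by (simp add: u_def I_def field_simps)
qed

lemma non_bridge_energy:
  assumes e: "e \<in> E" and non_bridge: "\<not> is_bridge V E p q e" and s: "s \<in> V" and t: "t \<in> V"
  shows "(voltage t s (p e) - voltage t s (q e))\<^sup>2 / L e
    = L e / (L e + resistance V (E - {e}) p q L (p e) (q e))\<^sup>2 *
      (jfun V (E - {e}) p q L (p e) (q e) s - jfun V (E - {e}) p q L (p e) (q e) t)\<^sup>2"
proof -
  interpret H: connected_network V "E - {e}" p q L
    using connected_network_delete_non_bridge[OF non_bridge] .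
  have pe: "p e \<in> V" and qe: "q e \<in> V" and L: "0 < L e"
    using e tail_in_V head_in_V length_pos by auto
  have "(H.voltage t s (p e) - H.voltage t s (q e))\<^sup>2
      = (jfun V (E - {e}) p q L (p e) (q e) s - jfun V (E - {e}) p q L (p e) (q e) t)\<^sup>2"
    using H.voltage_drop_reciprocity[OF s t pe qe] by (simp add: H.jfun_eq_voltage power2_commute)
  then show ?thesis
    using non_bridge_voltage_drop[OF e non_bridge s t] L
    by (simp add: power2_eq_square)
qed

lemma edge_energy_reciprocal:
  assumes e: "e \<in> E" and s: "s \<in> V" and t: "t \<in> V"
  shows "(voltage t s (p e) - voltage t s (q e))\<^sup>2 / L e
    = 1 / L e * (jfun V E p q L (p e) (q e) s - jfun V E p q L (p e) (q e) t)\<^sup>2"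
  using voltage_drop_reciprocity[OF s t tail_in_V[OF e] head_in_V[OF e]]
  by (simp add: jfun_eq_voltage power2_commute)

end

lemma metrized_graph_imp_connected_network:
  "metrized_graph V E p q L \<Longrightarrow> connected_network V E p q L"
  by (simp add: metrized_graph_def connected_network_def connected_network_axioms_def
      resistive_network_def)

theorem theorem3p7:
  fixes V :: "'v set" and E :: "'e set" and p q :: "'e \<Rightarrow> 'v" and L :: "'e \<Rightarrow> real"
    and s t :: 'v
  assumes "metrized_graph V E p q L"
    and "s \<in> V" and "t \<in> V"
  defines "B \<equiv> {e \<in> E. \<not> connected_in (E - {e}) p q s t}"
  shows "resistance V E p q L s t =
           (\<Sum>e\<in>B. L e) +
           (\<Sum>e\<in>{e\<in>E. \<not> is_bridge V E p q e}.
              L e / (L e + resistance V (E - {e}) p q L (p e) (q e))^2 *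
              (jfun V (E - {e}) p q L (p e) (q e) s - jfun V (E - {e}) p q L (p e) (q e) t)^2)
       \<and> resistance V E p q L s t =
           (\<Sum>e\<in>B. L e) +
           (\<Sum>e\<in>{e\<in>E. \<not> is_bridge V E p q e}.
              1 / L e * (jfun V E p q L (p e) (q e) s - jfun V E p q L (p e) (q e) t)^2)"
proof -
  interpret connected_network V E p q L
    using assms(1) by (rule metrized_graph_imp_connected_network)
  have s: "s \<in> V" and t: "t \<in> V" by fact+
  define w where "w e = (voltage t s (p e) - voltage t s (q e))\<^sup>2 / L e" for e
  define BR where "BR = {e \<in> E. is_bridge V E p q e}"
  define NB where "NB = {e \<in> E. \<not> is_bridge V E p q e}"
  have partition: "E = BR \<union> NB" "BR \<inter> NB = {}" "finite BR" "finite NB"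
    using finite_E by (auto simp: BR_def NB_def)
  have "resistance V E p q L s t = (\<Sum>e\<in>E. w e)"
    using resistance_eq_energy[OF s t] by (simp add: energy_def w_def)
  also have "\<dots> = (\<Sum>e\<in>BR. w e) + (\<Sum>e\<in>NB. w e)"
    unfolding partition(1) using partition(2-4) by (rule sum.union_disjoint[rotated 2])
  also have "(\<Sum>e\<in>BR. w e) = (\<Sum>e\<in>BR. if \<not> connected_in (E - {e}) p q s t then L e else 0)"
    using bridge_energy s t by (intro sum.cong) (auto simp: w_def BR_def)
  also have "\<dots> = (\<Sum>e\<in>B. L e)"
  proof -
    have "B = {e \<in> BR. \<not> connected_in (E - {e}) p q s t}"
      using separating_edge_is_bridge[OF s t] by (auto simp: B_def BR_def)
    then show ?thesis using partition(3) by (simp add: sum.inter_filter)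
  qed
  finally have "resistance V E p q L s t = (\<Sum>e\<in>B. L e) + (\<Sum>e\<in>NB. w e)" .
  moreover have "(\<Sum>e\<in>NB. w e) = (\<Sum>e\<in>NB. L e / (L e + resistance V (E - {e}) p q L (p e) (q e))\<^sup>2 *
      (jfun V (E - {e}) p q L (p e) (q e) s - jfun V (E - {e}) p q L (p e) (q e) t)\<^sup>2)"
    using non_bridge_energy s t by (intro sum.cong) (auto simp: w_def NB_def)
  moreover have "(\<Sum>e\<in>NB. w e)
      = (\<Sum>e\<in>NB. 1 / L e * (jfun V E p q L (p e) (q e) s - jfun V E p q L (p e) (q e) t)\<^sup>2)"
    using edge_energy_reciprocal s t by (intro sum.cong) (auto simp: w_def NB_def)
  ultimately show ?thesis unfolding NB_def by simp
qed

end
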